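(* Let $G$ be an edge-colored graph of order $n\geq 3$. If $e(G)+c(G)\geq\binom{n+1}{2}$ and $G$ contains exactly one rainbow triangle, then $G$ belongs to $\mathcal{G}_1$.
   Context: An edge-colored graph is a finite simple graph $G$ with a map $C:E(G)\to\mathbb{N}$. $e(G)=|E(G)|$, $c(G)$ is the number of distinct colors appearing on $E(G)$. A subgraph is rainbow if all its edges have distinct colors, monochromatic if all its edges have the same color. For disjoint $S,S'\subseteq V(G)$, $G[S,S']$ is the bipartite subgraph with classes $S,S'$ and all edges of $G$ between them. The family $\mathcal{G}_0$ of edge-colored complete graphs is defined recursively: $K_1\in\mathcal{G}_0$; an edge-colored complete graph $G$ of order $n\ge 2$ belongs to $\mathcal{G}_0$ iff $c(G)=n-1$ and there is a partition $V(G)=V_1\cup V_2$ into nonempty sets with $G[V_1,V_2]$ monochromatic and $G[V_i]\in\mathcal{G}_0$ for $i=1,2$. The family $\mathcal{G}_1$ of edge-colored complete graphs is defined by: the rainbow triangle (complete graph on 3 vertices with 3 distinct colors) belongs to $\mathcal{G}_1$; an edge-colored complete graph $G$ of order $n\ge 4$ belongs to $\mathcal{G}_1$ iff $c(G)=n$ and there is a partition $V(G)=V_1\cup V_2$ into nonempty sets such that $G[V_1,V_2]$ is monochromatic, $G[V_1]\in\mathcal{G}_1$ and $G[V_2]\in\mathcal{G}_0$. *)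

theory Defs
  imports Main
begin

text \<open>An edge-colored (finite simple) graph is given by a finite vertex set V,
 an edge set E of 2-element subsets of V, and a coloring C of edges by naturals.
 Colors on non-edges are irrelevant.\<close>

definition all_edges :: "'a set \<Rightarrow> 'a set set" where
  "all_edges V = {e. e \<subseteq> V \<and> card e = 2}"

definition edge_colored_graph :: "'a set \<Rightarrow> 'a set set \<Rightarrow> bool" where
  "edge_colored_graph V E \<longleftrightarrow> finite V \<and> E \<subseteq> all_edges V"

definition num_colors :: "'a set set \<Rightarrow> ('a set \<Rightarrow> nat) \<Rightarrow> nat" where
  "num_colors E C = card (C ` E)"

definition mono_between :: "'a set \<Rightarrow> 'a set \<Rightarrow> ('a set \<Rightarrow> nat) \<Rightarrow> bool" where
  "mono_between S S' C \<longleftrightarrow> (\<exists>k. \<forall>x\<in>S. \<forall>y\<in>S'. C {x, y} = k)"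

definition rainbow_triangles :: "'a set \<Rightarrow> 'a set set \<Rightarrow> ('a set \<Rightarrow> nat) \<Rightarrow> 'a set set" where
  "rainbow_triangles V E C =
     {T. T \<subseteq> V \<and> card T = 3 \<and> all_edges T \<subseteq> E \<and> card (C ` all_edges T) = 3}"

inductive in_G0 :: "'a set \<Rightarrow> ('a set \<Rightarrow> nat) \<Rightarrow> bool" where
  single: "card V = 1 \<Longrightarrow> in_G0 V C"
| split: "\<lbrakk> finite V; card V \<ge> 2; num_colors (all_edges V) C = card V - 1;
           V1 \<union> V2 = V; V1 \<inter> V2 = {}; V1 \<noteq> {}; V2 \<noteq> {};
           mono_between V1 V2 C; in_G0 V1 C; in_G0 V2 C \<rbrakk> \<Longrightarrow> in_G0 V C"

inductive in_G1 :: "'a set \<Rightarrow> ('a set \<Rightarrow> nat) \<Rightarrow> bool" where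
  triangle: "\<lbrakk> card V = 3; num_colors (all_edges V) C = 3 \<rbrakk> \<Longrightarrow> in_G1 V C"
| split: "\<lbrakk> finite V; card V \<ge> 4; num_colors (all_edges V) C = card V;
           V1 \<union> V2 = V; V1 \<inter> V2 = {}; V1 \<noteq> {}; V2 \<noteq> {};
           mono_between V1 V2 C; in_G1 V1 C; in_G0 V2 C \<rbrakk> \<Longrightarrow> in_G1 V C"

end

theory Submission
  imports Defs
begin

text \<open>Call a colour saturated at \<open>v\<close> if all its edges contain \<open>v\<close>, and let \<open>s(v)\<close> be the number
  of such colours: deleting \<open>v\<close> loses its \<open>d(v)\<close> edges and exactly \<open>s(v)\<close> colours. If the edge \<open>vx\<close> has a colour saturated
  at \<open>v\<close> and lies in no rainbow triangle, then neighbours of \<open>v\<close> in the other saturated colours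
  are non-neighbours of \<open>x\<close>, so \<open>d(x) + s(v) \<le> n\<close>. Starting from a vertex of maximum saturation
  this produces a vertex with \<open>d(v) + s(v) \<le> n\<close>, and deleting such vertices shows
  \<open>e + c < (n+1 choose 2)\<close> for rainbow-free graphs and \<open>e + c \<le> (n+1 choose 2)\<close> for graphs with
  at most one rainbow triangle.

  In the extremal case the low vertex \<open>v\<close> lies off the rainbow triangle, so by induction \<open>G - v\<close> is
  complete and in \<open>G\<^sub>1\<close>; then \<open>v\<close> has full degree and exactly one saturated colour, which is
  what allows a monochromatic cut of \<open>G - v\<close> to be extended to \<open>G\<close>. With the rainbow triangle on
  one side of that cut, counting colours forces this side into \<open>G\<^sub>1\<close> (induction) and the other
  into \<open>G\<^sub>0\<close> (the same argument for rainbow-free graphs with \<open>n - 1\<close> colours).\<close>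

definition vertex_degree :: "'a set set \<Rightarrow> 'a \<Rightarrow> nat" where
  "vertex_degree E v = card {e \<in> E. v \<in> e}"

definition delete_vertex :: "'a set set \<Rightarrow> 'a \<Rightarrow> 'a set set" where
  "delete_vertex E v = {e \<in> E. v \<notin> e}"

definition saturated_colors :: "'a set set \<Rightarrow> ('a set \<Rightarrow> nat) \<Rightarrow> 'a \<Rightarrow> nat set" where
  "saturated_colors E C v = {c \<in> C ` E. \<forall>e\<in>E. C e = c \<longrightarrow> v \<in> e}"

lemma finite_all_edges: "finite V \<Longrightarrow> finite (all_edges V)"
  unfolding all_edges_def by (rule rev_finite_subset[of "Pow V"]) auto

lemma edge_colored_graph_all_edges [simp]: "edge_colored_graph V (all_edges V) \<longleftrightarrow> finite V"
  by (simp add: edge_colored_graph_def)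

lemma finite_edges: "edge_colored_graph V E \<Longrightarrow> finite E"
  unfolding edge_colored_graph_def using finite_all_edges rev_finite_subset by blast

lemma edge_subset_card_two: "edge_colored_graph V E \<Longrightarrow> e \<in> E \<Longrightarrow> e \<subseteq> V \<and> card e = 2"
  unfolding edge_colored_graph_def all_edges_def by auto

lemma all_edges_iff: "e \<in> all_edges V \<longleftrightarrow> (\<exists>x y. x \<in> V \<and> y \<in> V \<and> x \<noteq> y \<and> e = {x, y})"
  unfolding all_edges_def by (auto simp: card_2_iff)

lemma doubleton_in_all_edges [simp]: "{x, y} \<in> all_edges V \<longleftrightarrow> x \<in> V \<and> y \<in> V \<and> x \<noteq> y"
  unfolding all_edges_def by (auto simp: card_2_iff)

lemma edge_endpoints:
  assumes "edge_colored_graph V E" "{x, y} \<in> E"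
  shows "x \<in> V" "y \<in> V" "x \<noteq> y"
proof -
  have "{x, y} \<in> all_edges V" using assms unfolding edge_colored_graph_def by blast
  then show "x \<in> V" "y \<in> V" "x \<noteq> y" by simp_all
qed

lemma edge_containing: "card e = 2 \<Longrightarrow> v \<in> e \<Longrightarrow> \<exists>x. x \<noteq> v \<and> e = {v, x}"
  by (auto simp: card_2_iff)

lemma card_all_edges: "finite V \<Longrightarrow> card (all_edges V) = card V choose 2"
  unfolding all_edges_def using n_subsets by blast

lemma Suc_choose_two: "Suc n choose 2 = (n choose 2) + n"
  by (simp add: numeral_2_eq_2)

lemma all_edges_triangle:
  "x \<noteq> y \<Longrightarrow> x \<noteq> z \<Longrightarrow> y \<noteq> z \<Longrightarrow> all_edges {x, y, z} = {{x, y}, {x, z}, {y, z}}"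
  by (rule set_eqI, unfold all_edges_iff) auto

lemma card_three_iff: "card {a, b, c} = 3 \<longleftrightarrow> a \<noteq> b \<and> a \<noteq> c \<and> b \<noteq> c"
  by (auto simp: card_insert_if)

lemma num_colors_le_card_edges: "finite E \<Longrightarrow> num_colors E C \<le> card E"
  unfolding num_colors_def by (rule card_image_le)

lemma Diff_singleton_nonempty: "2 \<le> card V \<Longrightarrow> V - {v} \<noteq> {}"
proof
  assume "2 \<le> card V" "V - {v} = {}"
  then have "V \<subseteq> {v}" by blast
  then have "card V \<le> card {v}" by (rule card_mono[rotated]) simp
  then show False using \<open>2 \<le> card V\<close> by simp
qed

lemma ex_max_on_finite:
  fixes f :: "'a \<Rightarrow> nat"
  assumes "finite A" "A \<noteq> {}"
  shows "\<exists>a\<in>A. \<forall>b\<in>A. f b \<le> f a"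
proof -
  have "Max (f ` A) \<in> f ` A" using assms by simp
  then obtain a where "a \<in> A" "f a = Max (f ` A)" by auto
  then show ?thesis using assms by (metis Max_ge finite_imageI image_eqI)
qed

section \<open>Deleting a vertex\<close>

lemma all_edges_delete: "all_edges (V - {v}) = delete_vertex (all_edges V) v"
  unfolding all_edges_def delete_vertex_def by auto

lemma edge_colored_graph_delete_vertex:
  "edge_colored_graph V E \<Longrightarrow> edge_colored_graph (V - {v}) (delete_vertex E v)"
  unfolding edge_colored_graph_def all_edges_def delete_vertex_def by auto

lemma card_edges_delete_vertex:
  "finite E \<Longrightarrow> card E = card (delete_vertex E v) + vertex_degree E v"
proof -
  assume "finite E"
  moreover have "E = delete_vertex E v \<union> {e \<in> E. v \<in> e}"
    and "delete_vertex E v \<inter> {e \<in> E. v \<in> e} = {}"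
    unfolding delete_vertex_def by auto
  ultimately show ?thesis
    unfolding vertex_degree_def by (metis card_Un_disjoint finite_Un)
qed

lemma num_colors_delete_vertex:
  "finite E \<Longrightarrow> num_colors E C = num_colors (delete_vertex E v) C + card (saturated_colors E C v)"
proof -
  assume "finite E"
  moreover have "C ` E = C ` delete_vertex E v \<union> saturated_colors E C v"
    and "C ` delete_vertex E v \<inter> saturated_colors E C v = {}"
    unfolding delete_vertex_def saturated_colors_def by blast+
  ultimately show ?thesis
    unfolding num_colors_def by (metis card_Un_disjoint finite_Un finite_imageI)
qed

lemma num_colors_all_edges_delete_vertex:
  "finite V \<Longrightarrow> num_colors (all_edges V) C =
    num_colors (all_edges (V - {v})) C + card (saturated_colors (all_edges V) C v)"
  using num_colors_delete_vertex[OF finite_all_edges] all_edges_delete by metis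

lemma rainbow_triangles_delete_vertex:
  "rainbow_triangles (V - {v}) (delete_vertex E v) C = {T \<in> rainbow_triangles V E C. v \<notin> T}"
  unfolding rainbow_triangles_def delete_vertex_def all_edges_def by auto

lemma rainbow_triangles_induced:
  "W \<subseteq> V \<Longrightarrow>
    rainbow_triangles W (all_edges W) C = {T \<in> rainbow_triangles V (all_edges V) C. T \<subseteq> W}"
  unfolding rainbow_triangles_def all_edges_def by auto

lemma vertex_degree_all_edges:
  assumes "finite V" "v \<in> V"
  shows "vertex_degree (all_edges V) v = card V - 1"
proof -
  have "card (all_edges V) = card (all_edges (V - {v})) + vertex_degree (all_edges V) v"
    using card_edges_delete_vertex[OF finite_all_edges[OF assms(1)]] all_edges_delete by metis
  moreover have "card V = Suc (card (V - {v}))" using assms by (metis card_Suc_Diff1)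
  ultimately show ?thesis using assms(1) by (simp add: card_all_edges Suc_choose_two)
qed

lemma complete_if_delete_vertex_complete:
  assumes g: "edge_colored_graph V E" and v: "v \<in> V"
    and "delete_vertex E v = all_edges (V - {v})" "vertex_degree E v = card V - 1"
  shows "E = all_edges V"
proof -
  have fV: "finite V" using g edge_colored_graph_def by blast
  have "{e \<in> E. v \<in> e} = {e \<in> all_edges V. v \<in> e}"
  proof (rule card_subset_eq)
    show "finite {e \<in> all_edges V. v \<in> e}" using finite_all_edges[OF fV] by simp
    show "{e \<in> E. v \<in> e} \<subseteq> {e \<in> all_edges V. v \<in> e}" using g unfolding edge_colored_graph_def by auto
    show "card {e \<in> E. v \<in> e} = card {e \<in> all_edges V. v \<in> e}"
      using assms(4) vertex_degree_all_edges[OF fV v] unfolding vertex_degree_def by simp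
  qed
  moreover have "E = delete_vertex E v \<union> {e \<in> E. v \<in> e}" unfolding delete_vertex_def by auto
  ultimately have "E = delete_vertex (all_edges V) v \<union> {e \<in> all_edges V. v \<in> e}"
    using assms(3) by (simp add: all_edges_delete)
  then show ?thesis unfolding delete_vertex_def by auto
qed

lemma vertex_degree_le_card_neighbours:
  assumes "edge_colored_graph V E"
  shows "vertex_degree E x \<le> card {y. {x, y} \<in> E}"
    and "{y. {x, y} \<in> E} \<subseteq> V - {x}"
proof -
  show N: "{y. {x, y} \<in> E} \<subseteq> V - {x}" using edge_endpoints[OF assms] by blast
  have "finite V" using assms edge_colored_graph_def by blast
  then have fN: "finite {y. {x, y} \<in> E}" using N finite_subset by blast
  have "{e \<in> E. x \<in> e} \<subseteq> (\<lambda>y. {x, y}) ` {y. {x, y} \<in> E}"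
    using edge_subset_card_two[OF assms] edge_containing by (smt (verit) image_iff mem_Collect_eq subsetI)
  then have "vertex_degree E x \<le> card ((\<lambda>y. {x, y}) ` {y. {x, y} \<in> E})"
    unfolding vertex_degree_def using fN by (simp add: card_mono)
  also have "\<dots> \<le> card {y. {x, y} \<in> E}" using fN by (rule card_image_le)
  finally show "vertex_degree E x \<le> card {y. {x, y} \<in> E}" .
qed

lemma vertex_degree_le:
  assumes "edge_colored_graph V E" "x \<in> V"
  shows "vertex_degree E x \<le> card V - 1"
proof -
  have "finite V" using assms edge_colored_graph_def by blast
  then have "card {y. {x, y} \<in> E} \<le> card (V - {x})"
    using vertex_degree_le_card_neighbours(2)[OF assms(1)] by (simp add: card_mono)
  then show ?thesis using vertex_degree_le_card_neighbours(1)[OF assms(1), of x] assms(2) by simp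
qed

section \<open>Rainbow triangles and saturated colours\<close>

lemma rainbow_triangle_iff:
  "T \<in> rainbow_triangles V E C \<longleftrightarrow>
    (\<exists>x y z. T = {x, y, z} \<and> x \<noteq> y \<and> x \<noteq> z \<and> y \<noteq> z \<and> x \<in> V \<and> y \<in> V \<and> z \<in> V \<and>
      {x, y} \<in> E \<and> {x, z} \<in> E \<and> {y, z} \<in> E \<and>
      C {x, y} \<noteq> C {x, z} \<and> C {x, y} \<noteq> C {y, z} \<and> C {x, z} \<noteq> C {y, z})"
  (is "_ \<longleftrightarrow> (\<exists>x y z. ?P x y z)")
proof
  assume "T \<in> rainbow_triangles V E C"
  then have T: "T \<subseteq> V" "card T = 3" "all_edges T \<subseteq> E" "card (C ` all_edges T) = 3"
    unfolding rainbow_triangles_def by auto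
  then obtain x y z where xyz: "T = {x, y, z}" "x \<noteq> y" "y \<noteq> z" "x \<noteq> z"
    by (auto simp: card_3_iff)
  then have "?P x y z" using T all_edges_triangle[of x y z] by (simp add: card_three_iff)
  then show "\<exists>x y z. ?P x y z" by blast
next
  assume "\<exists>x y z. ?P x y z"
  then obtain x y z where "?P x y z" by blast
  then show "T \<in> rainbow_triangles V E C"
    unfolding rainbow_triangles_def using all_edges_triangle[of x y z] by (simp add: card_three_iff)
qed

lemma rainbow_triangleI:
  assumes "x \<in> V" "y \<in> V" "z \<in> V" "x \<noteq> y" "x \<noteq> z" "y \<noteq> z"
    and "{x, y} \<in> E" "{x, z} \<in> E" "{y, z} \<in> E"
    and "C {x, y} \<noteq> C {x, z}" "C {x, y} \<noteq> C {y, z}" "C {x, z} \<noteq> C {y, z}"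
  shows "{x, y, z} \<in> rainbow_triangles V E C"
  unfolding rainbow_triangle_iff using assms by blast

lemma two_colors_equal_if_not_rainbow:
  assumes "x \<in> V" "y \<in> V" "z \<in> V" "x \<noteq> y" "x \<noteq> z" "y \<noteq> z"
    and "{x, y, z} \<notin> rainbow_triangles V (all_edges V) C"
  shows "C {x, y} = C {x, z} \<or> C {x, y} = C {y, z} \<or> C {x, z} = C {y, z}"
  using assms unfolding rainbow_triangle_iff by auto

lemma saturated_color_witness:
  assumes "edge_colored_graph V E" "c \<in> saturated_colors E C v"
  obtains x where "x \<in> V" "x \<noteq> v" "{v, x} \<in> E" "C {v, x} = c"
proof -
  obtain e where e: "e \<in> E" "C e = c" "v \<in> e" using assms(2) unfolding saturated_colors_def by auto
  then obtain x where "x \<noteq> v" "e = {v, x}" using edge_containing edge_subset_card_two[OF assms(1)] by metis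
  then show ?thesis using that e edge_endpoints[OF assms(1)] by blast
qed

lemma saturated_color_at:
  "c \<in> saturated_colors E C v \<Longrightarrow> e \<in> E \<Longrightarrow> C e = c \<Longrightarrow> v \<in> e"
  unfolding saturated_colors_def by auto

lemma finite_saturated_colors: "finite E \<Longrightarrow> finite (saturated_colors E C v)"
  unfolding saturated_colors_def by simp

section \<open>Vertices of small degree plus saturation\<close>

text \<open>Neighbours of \<open>v\<close> in saturated colours other than \<open>C {v, x}\<close> are not adjacent to \<open>x\<close>,
  since otherwise they would span a rainbow triangle with \<open>v\<close> and \<open>x\<close>.\<close>

lemma degree_plus_saturated_le:
  assumes g: "edge_colored_graph V E" and x: "{v, x} \<in> E" "C {v, x} \<in> saturated_colors E C v"
    and no_rainbow: "\<forall>T\<in>rainbow_triangles V E C. \<not> {v, x} \<subseteq> T"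
  shows "vertex_degree E x + card (saturated_colors E C v) \<le> card V"
proof -
  let ?S = "saturated_colors E C v" and ?a = "C {v, x}" and ?N = "{y. {x, y} \<in> E}"
  have fV: "finite V" using g edge_colored_graph_def by blast
  have xv: "v \<in> V" "x \<in> V" "x \<noteq> v" using edge_endpoints[OF g x(1)] by auto
  define w where "w c = (SOME y. y \<in> V \<and> y \<noteq> v \<and> {v, y} \<in> E \<and> C {v, y} = c)" for c
  have w: "w c \<in> V \<and> w c \<noteq> v \<and> {v, w c} \<in> E \<and> C {v, w c} = c" if "c \<in> ?S" for c
    unfolding w_def by (rule someI_ex) (meson saturated_color_witness[OF g that])
  let ?R = "w ` (?S - {?a})"
  have "inj_on w (?S - {?a})" by (rule inj_onI) (metis DiffD1 w)
  then have card_R: "card ?R = card ?S - 1"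
    using x(2) finite_saturated_colors[OF finite_edges[OF g]] by (simp add: card_image)
  have R: "?R \<subseteq> V - {x}" using w x by fastforce
  have "?N \<inter> ?R = {}"
  proof (rule ccontr)
    assume "?N \<inter> ?R \<noteq> {}"
    then obtain c where c: "c \<in> ?S" "c \<noteq> ?a" "{x, w c} \<in> E" by auto
    have "C {x, w c} \<noteq> ?a" "C {x, w c} \<noteq> c"
      using saturated_color_at[OF x(2) c(3)] saturated_color_at[OF c(1,3)] w[OF c(1)] xv by auto
    moreover have "x \<noteq> w c" using edge_endpoints[OF g c(3)] by simp
    ultimately have "{v, x, w c} \<in> rainbow_triangles V E C"
      using w[OF c(1)] c xv x by (intro rainbow_triangleI) auto
    then show False using no_rainbow by auto
  qed
  moreover have "?N \<subseteq> V - {x}" by (rule vertex_degree_le_card_neighbours(2)[OF g])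
  ultimately have "card ?N + card ?R \<le> card (V - {x})"
    using R fV by (metis card_Un_disjoint card_mono finite_Diff finite_subset le_sup_iff)
  moreover have "vertex_degree E x \<le> card ?N" by (rule vertex_degree_le_card_neighbours(1)[OF g])
  moreover have "card ?S \<ge> 1" using x(2) finite_saturated_colors[OF finite_edges[OF g]]
    by (metis One_nat_def Suc_leI card_gt_0_iff empty_iff)
  moreover have "card V > 0" using fV xv(1) by (auto simp: card_gt_0_iff)
  ultimately show ?thesis using card_R xv fV by simp
qed

lemma saturated_colors_ge_two:
  assumes "edge_colored_graph V E" "v \<in> V"
    and "card V < vertex_degree E v + card (saturated_colors E C v)"
  shows "2 \<le> card (saturated_colors E C v)"
proof -
  have "finite V" using assms(1) edge_colored_graph_def by blast
  then have "card V > 0" using assms(2) by (auto simp: card_gt_0_iff)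
  then show ?thesis using vertex_degree_le[OF assms(1,2)] assms(3) by linarith
qed

lemma exists_low_vertex:
  assumes g: "edge_colored_graph V E"
    and good_edge: "\<forall>u\<in>V. card V < vertex_degree E u + card (saturated_colors E C u) \<Longrightarrow>
      \<exists>v x. v \<in> V \<and> (\<forall>w\<in>V. card (saturated_colors E C w) \<le> card (saturated_colors E C v)) \<and>
        {v, x} \<in> E \<and> C {v, x} \<in> saturated_colors E C v \<and>
        (\<forall>T\<in>rainbow_triangles V E C. \<not> {v, x} \<subseteq> T)"
  shows "\<exists>v\<in>V. vertex_degree E v + card (saturated_colors E C v) \<le> card V"
proof (rule ccontr)
  assume "\<not> ?thesis"
  then have high: "\<forall>u\<in>V. card V < vertex_degree E u + card (saturated_colors E C u)" by auto
  obtain v x where v: "v \<in> V" "\<forall>w\<in>V. card (saturated_colors E C w) \<le> card (saturated_colors E C v)"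
    and x: "{v, x} \<in> E" "C {v, x} \<in> saturated_colors E C v"
      "\<forall>T\<in>rainbow_triangles V E C. \<not> {v, x} \<subseteq> T"
    using good_edge[OF high] by blast
  have "x \<in> V" using edge_endpoints[OF g x(1)] by simp
  then show False using degree_plus_saturated_le[OF g x] high v(2) by fastforce
qed

lemma exists_low_vertex_if_rainbow_free:
  assumes g: "edge_colored_graph V E" and "V \<noteq> {}" "rainbow_triangles V E C = {}"
  shows "\<exists>v\<in>V. vertex_degree E v + card (saturated_colors E C v) \<le> card V"
proof (rule exists_low_vertex[OF g])
  assume high: "\<forall>u\<in>V. card V < vertex_degree E u + card (saturated_colors E C u)"
  have fV: "finite V" using g edge_colored_graph_def by blast
  obtain v where v: "v \<in> V" "\<forall>w\<in>V. card (saturated_colors E C w) \<le> card (saturated_colors E C v)"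
    using ex_max_on_finite[OF fV assms(2), of "\<lambda>w. card (saturated_colors E C w)"] by blast
  have "saturated_colors E C v \<noteq> {}" using saturated_colors_ge_two[OF g v(1)] high v(1) by fastforce
  then obtain c where c: "c \<in> saturated_colors E C v" by blast
  then obtain x where "{v, x} \<in> E" "C {v, x} = c" by (rule saturated_color_witness[OF g])
  then show "\<exists>v x. v \<in> V \<and> (\<forall>w\<in>V. card (saturated_colors E C w) \<le> card (saturated_colors E C v)) \<and>
      {v, x} \<in> E \<and> C {v, x} \<in> saturated_colors E C v \<and> (\<forall>T\<in>rainbow_triangles V E C. \<not> {v, x} \<subseteq> T)"
    using v c assms(3) by blast
qed

lemma saturated_color_edge_avoiding:
  assumes g: "edge_colored_graph V E" and T: "finite T" "v \<in> T"
    and "card T \<le> card (saturated_colors E C v)"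
  shows "\<exists>x. x \<notin> T \<and> {v, x} \<in> E \<and> C {v, x} \<in> saturated_colors E C v"
proof (rule ccontr)
  assume none: "\<not> ?thesis"
  have "saturated_colors E C v \<subseteq> (\<lambda>x. C {v, x}) ` (T - {v})"
  proof
    fix c assume c: "c \<in> saturated_colors E C v"
    then obtain x where x: "x \<noteq> v" "{v, x} \<in> E" "C {v, x} = c" by (rule saturated_color_witness[OF g])
    then have "x \<in> T" using none c by blast
    then show "c \<in> (\<lambda>x. C {v, x}) ` (T - {v})" using x by blast
  qed
  then have "card (saturated_colors E C v) \<le> card ((\<lambda>x. C {v, x}) ` (T - {v}))"
    using T(1) by (simp add: card_mono)
  also have "\<dots> \<le> card (T - {v})" using T(1) by (simp add: card_image_le)
  also have "\<dots> < card T" using T by (rule card_Diff1_less)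
  finally show False using assms(4) by simp
qed

lemma exists_low_vertex_if_one_rainbow_triangle:
  assumes g: "edge_colored_graph V E" and "card V \<ge> 4" and rt: "rainbow_triangles V E C = {T}"
  shows "\<exists>v\<in>V. vertex_degree E v + card (saturated_colors E C v) \<le> card V"
proof (rule exists_low_vertex[OF g])
  let ?s = "\<lambda>w. card (saturated_colors E C w)"
  assume high: "\<forall>u\<in>V. card V < vertex_degree E u + ?s u"
  have fV: "finite V" using g edge_colored_graph_def by blast
  have T: "T \<subseteq> V" "card T = 3" using rt unfolding rainbow_triangles_def by auto
  have fT: "finite T" using T(1) fV finite_subset by blast
  have s2: "2 \<le> ?s u" if "u \<in> V" for u using saturated_colors_ge_two[OF g that] high that by blast
  have "V \<noteq> {}" using assms(2) by auto
  then obtain v where v: "v \<in> V" "\<forall>w\<in>V. ?s w \<le> ?s v" using ex_max_on_finite[OF fV, of ?s] by blast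
  have "\<exists>u\<in>V. (\<forall>w\<in>V. ?s w \<le> ?s u) \<and> (u \<notin> T \<or> 3 \<le> ?s u)"
  proof (cases "v \<notin> T \<or> 3 \<le> ?s v")
    case False
    have "\<not> V \<subseteq> T"
    proof
      assume "V \<subseteq> T"
      then have "card V \<le> card T" by (rule card_mono[OF fT])
      then show False using T(2) assms(2) by simp
    qed
    then obtain u where u: "u \<in> V" "u \<notin> T" by blast
    have "?s v = 2" using False s2[OF v(1)] by simp
    then have "\<forall>w\<in>V. ?s w \<le> ?s u" using v(2) s2[OF u(1)] by auto
    then show ?thesis using u by blast
  qed (use v in blast)
  then obtain u where u: "u \<in> V" "\<forall>w\<in>V. ?s w \<le> ?s u" "u \<notin> T \<or> 3 \<le> ?s u" by blast
  have "\<exists>x. {u, x} \<in> E \<and> C {u, x} \<in> saturated_colors E C u \<and> \<not> {u, x} \<subseteq> T"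
  proof (cases "u \<in> T")
    case True
    then show ?thesis using saturated_color_edge_avoiding[OF g fT True] T(2) u(3) by fastforce
  next
    case False
    obtain c where "c \<in> saturated_colors E C u" using s2[OF u(1)] by fastforce
    then obtain x where "{u, x} \<in> E" "C {u, x} = c" by (rule saturated_color_witness[OF g])
    then show ?thesis using \<open>c \<in> saturated_colors E C u\<close> False by blast
  qed
  then show "\<exists>v x. v \<in> V \<and> (\<forall>w\<in>V. ?s w \<le> ?s v) \<and> {v, x} \<in> E \<and>
      C {v, x} \<in> saturated_colors E C v \<and> (\<forall>T\<in>rainbow_triangles V E C. \<not> {v, x} \<subseteq> T)"
    using u rt by blast
qed

lemma card_saturated_colors_le_one_if_low_complete:
  assumes "finite V" "v \<in> V"
    and "vertex_degree (all_edges V) v + card (saturated_colors (all_edges V) C v) \<le> card V"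
  shows "card (saturated_colors (all_edges V) C v) \<le> 1"
proof -
  have "card V > 0" using assms(1,2) card_gt_0_iff by blast
  then show ?thesis using assms(3) vertex_degree_all_edges[OF assms(1,2)] by linarith
qed

section \<open>Bounds on edges plus colours\<close>

lemma card_plus_num_colors_delete_vertex:
  "finite E \<Longrightarrow> card E + num_colors E C =
    card (delete_vertex E v) + num_colors (delete_vertex E v) C +
    (vertex_degree E v + card (saturated_colors E C v))"
  using card_edges_delete_vertex[of E v] num_colors_delete_vertex[of E C v] by simp

lemma edges_plus_colors_less_if_rainbow_free:
  assumes "edge_colored_graph V E" "V \<noteq> {}" "rainbow_triangles V E C = {}"
  shows "card E + num_colors E C < Suc (card V) choose 2"
  using assms
proof (induction "card V" arbitrary: V E rule: less_induct)
  case less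
  have fV: "finite V" using less.prems(1) edge_colored_graph_def by blast
  show ?case
  proof (cases "card V = 1")
    case True
    then have "all_edges V = {}"
      using card_all_edges[OF fV] finite_all_edges[OF fV] by (simp add: numeral_2_eq_2)
    then have "E = {}" using less.prems(1) edge_colored_graph_def by blast
    then show ?thesis using True by (simp add: num_colors_def)
  next
    case False
    have "card V \<noteq> 0" using less.prems(2) fV by simp
    then have n: "card V \<ge> 2" using False by linarith
    obtain v where v: "v \<in> V" "vertex_degree E v + card (saturated_colors E C v) \<le> card V"
      using exists_low_vertex_if_rainbow_free[OF less.prems] by blast
    have n': "card V = Suc (card (V - {v}))" using fV v(1) by (metis card_Suc_Diff1)
    have "card (delete_vertex E v) + num_colors (delete_vertex E v) C < Suc (card (V - {v})) choose 2"
    proof (rule less.hyps)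
      show "card (V - {v}) < card V" using n' by simp
      show "V - {v} \<noteq> {}" using n by (rule Diff_singleton_nonempty)
      show "edge_colored_graph (V - {v}) (delete_vertex E v)"
        using edge_colored_graph_delete_vertex[OF less.prems(1)] .
      show "rainbow_triangles (V - {v}) (delete_vertex E v) C = {}"
        using less.prems(3) unfolding rainbow_triangles_delete_vertex by simp
    qed
    then show ?thesis
      using card_plus_num_colors_delete_vertex[OF finite_edges[OF less.prems(1)], of C v] v(2) n'
      by (simp add: Suc_choose_two)
  qed
qed

lemma num_colors_le_if_rainbow_free:
  assumes "finite V" "rainbow_triangles V (all_edges V) C = {}" "W \<subseteq> V" "W \<noteq> {}"
  shows "num_colors (all_edges W) C \<le> card W - 1"
proof -
  have "finite W" using assms(1,3) finite_subset by blast
  moreover have "rainbow_triangles W (all_edges W) C = {}"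
    using rainbow_triangles_induced[OF assms(3), of C] assms(2) by simp
  ultimately show ?thesis
    using edges_plus_colors_less_if_rainbow_free[of W "all_edges W" C] assms(4)
    by (simp add: card_all_edges Suc_choose_two)
qed

lemma rainbow_triangles_at_most_one_cases:
  assumes "finite V" "card (rainbow_triangles V E C) \<le> 1"
  obtains "rainbow_triangles V E C = {}" | T where "rainbow_triangles V E C = {T}"
proof -
  have "finite (rainbow_triangles V E C)"
    using assms(1) unfolding rainbow_triangles_def by (simp add: finite_subset[of _ "Pow V"] subset_iff)
  then show ?thesis using assms(2) that by (metis card_1_singleton_iff card_0_eq le_Suc_eq le_zero_eq One_nat_def)
qed

lemma edges_plus_colors_le_if_card_le_three:
  assumes "edge_colored_graph V E" "card V \<le> 3"
  shows "card E + num_colors E C \<le> Suc (card V) choose 2"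
proof -
  have "finite V" and fE: "finite E" using assms(1) finite_edges edge_colored_graph_def by blast+
  then have "card E \<le> card V choose 2"
    using assms(1) card_mono[OF finite_all_edges] card_all_edges unfolding edge_colored_graph_def by metis
  moreover have "2 * (card V choose 2) \<le> Suc (card V) choose 2"
  proof -
    consider "card V = 0" | "card V = 1" | "card V = 2" | "card V = 3" using assms(2) by linarith
    then show ?thesis by cases (simp_all add: choose_two)
  qed
  ultimately show ?thesis using num_colors_le_card_edges[OF fE, of C] by linarith
qed

lemma edges_plus_colors_le_if_at_most_one_rainbow_triangle:
  assumes "edge_colored_graph V E" "card (rainbow_triangles V E C) \<le> 1"
  shows "card E + num_colors E C \<le> Suc (card V) choose 2"
  using assms
proof (induction "card V" arbitrary: V E rule: less_induct)
  case less
  note g = less.prems(1)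
  have fV: "finite V" and fE: "finite E" using g finite_edges edge_colored_graph_def by blast+
  show ?case
  proof (cases "card V \<le> 3")
    case True
    then show ?thesis by (rule edges_plus_colors_le_if_card_le_three[OF g])
  next
    case False
    then have n: "card V \<ge> 4" by simp
    from fV less.prems(2) show ?thesis
    proof (cases rule: rainbow_triangles_at_most_one_cases)
      case 1
      have "V \<noteq> {}" using n by auto
      then show ?thesis using edges_plus_colors_less_if_rainbow_free[OF g _ 1] by fastforce
    next
      case (2 T)
      note rt = 2
      obtain v where v: "v \<in> V" "vertex_degree E v + card (saturated_colors E C v) \<le> card V"
        using exists_low_vertex_if_one_rainbow_triangle[OF g n rt] by blast
      have n': "card V = Suc (card (V - {v}))" using fV v(1) by (metis card_Suc_Diff1)
      have "card (delete_vertex E v) + num_colors (delete_vertex E v) C \<le> Suc (card (V - {v})) choose 2"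
      proof (rule less.hyps)
        show "card (V - {v}) < card V" using n' by simp
        show "edge_colored_graph (V - {v}) (delete_vertex E v)"
          using edge_colored_graph_delete_vertex[OF g] .
        have "rainbow_triangles (V - {v}) (delete_vertex E v) C \<subseteq> {T}"
          using rt unfolding rainbow_triangles_delete_vertex by auto
        then have "card (rainbow_triangles (V - {v}) (delete_vertex E v) C) \<le> card {T}"
          by (rule card_mono[rotated]) simp
        then show "card (rainbow_triangles (V - {v}) (delete_vertex E v) C) \<le> 1" by simp
      qed
      then show ?thesis
        using card_plus_num_colors_delete_vertex[OF fE, of C v] v(2) n' by (simp add: Suc_choose_two)
    qed
  qed
qed

text \<open>Otherwise deleting it would leave a rainbow-free graph, which is too sparse.\<close>

lemma low_vertex_not_in_rainbow_triangle:
  assumes g: "edge_colored_graph V E" and "card V \<ge> 2" and rt: "rainbow_triangles V E C = {T}"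
    and "Suc (card V) choose 2 \<le> card E + num_colors E C"
    and v: "v \<in> V" "vertex_degree E v + card (saturated_colors E C v) \<le> card V"
  shows "v \<notin> T"
proof
  assume "v \<in> T"
  have fV: "finite V" using g edge_colored_graph_def by blast
  have n': "card V = Suc (card (V - {v}))" using fV v(1) by (metis card_Suc_Diff1)
  have "rainbow_triangles (V - {v}) (delete_vertex E v) C = {}"
    using rainbow_triangles_delete_vertex[of V v E C] rt \<open>v \<in> T\<close> by auto
  moreover have "V - {v} \<noteq> {}" using assms(2) by (rule Diff_singleton_nonempty)
  ultimately have "card (delete_vertex E v) + num_colors (delete_vertex E v) C < Suc (card (V - {v})) choose 2"
    using edges_plus_colors_less_if_rainbow_free[OF edge_colored_graph_delete_vertex[OF g]] by blast
  then show False
    using card_plus_num_colors_delete_vertex[OF finite_edges[OF g], of C v] assms(4) v(2) n'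
    by (simp add: Suc_choose_two)
qed

section \<open>Monochromatic cuts\<close>

definition mono_cut :: "'a set \<Rightarrow> ('a set \<Rightarrow> nat) \<Rightarrow> 'a set \<Rightarrow> 'a set \<Rightarrow> bool" where
  "mono_cut V C V1 V2 \<longleftrightarrow>
    V1 \<union> V2 = V \<and> V1 \<inter> V2 = {} \<and> V1 \<noteq> {} \<and> V2 \<noteq> {} \<and> mono_between V1 V2 C"

lemma mono_between_sym: "mono_between S S' C \<Longrightarrow> mono_between S' S C"
  unfolding mono_between_def by (metis insert_commute)

lemma mono_cut_sym: "mono_cut V C V1 V2 \<Longrightarrow> mono_cut V C V2 V1"
  unfolding mono_cut_def using mono_between_sym by blast

lemma mono_cut_card:
  assumes "finite V" "mono_cut V C V1 V2"
  shows "finite V1" "finite V2" "card V1 + card V2 = card V" "card V1 \<ge> 1" "card V2 \<ge> 1"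
proof -
  have P: "V1 \<union> V2 = V" "V1 \<inter> V2 = {}" "V1 \<noteq> {}" "V2 \<noteq> {}"
    using assms(2) unfolding mono_cut_def by blast+
  then show fin: "finite V1" "finite V2" using assms(1) by auto
  show "card V1 + card V2 = card V" using card_Un_disjoint[OF fin P(2)] P(1) by simp
  show "card V1 \<ge> 1" "card V2 \<ge> 1" using fin P(3,4) by (auto simp: Suc_le_eq card_gt_0_iff)
qed

lemma cross_color_commute:
  "(\<And>x y. x \<in> V1 \<Longrightarrow> y \<in> V2 \<Longrightarrow> C {x, y} = k) \<Longrightarrow> x \<in> V2 \<Longrightarrow> y \<in> V1 \<Longrightarrow> C {x, y} = k"
  by (metis insert_commute)

lemma colors_across_cut:
  assumes "V1 \<union> V2 = V" and cross: "\<And>x y. x \<in> V1 \<Longrightarrow> y \<in> V2 \<Longrightarrow> C {x, y} = k"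
  shows "C ` all_edges V \<subseteq> C ` all_edges V1 \<union> C ` all_edges V2 \<union> {k}"
proof
  fix c assume "c \<in> C ` all_edges V"
  then obtain x y where xy: "x \<in> V" "y \<in> V" "x \<noteq> y" "c = C {x, y}" by (auto simp: all_edges_iff)
  consider "x \<in> V1" "y \<in> V1" | "x \<in> V2" "y \<in> V2" | "x \<in> V1" "y \<in> V2" | "x \<in> V2" "y \<in> V1"
    using xy assms(1) by blast
  then show "c \<in> C ` all_edges V1 \<union> C ` all_edges V2 \<union> {k}"
    by cases (use xy cross cross_color_commute[of V1 V2 C k, OF cross] in auto)
qed

lemma num_colors_across_cut:
  assumes "finite V" "V1 \<union> V2 = V" "\<And>x y. x \<in> V1 \<Longrightarrow> y \<in> V2 \<Longrightarrow> C {x, y} = k"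
  shows "num_colors (all_edges V) C \<le> num_colors (all_edges V1) C + num_colors (all_edges V2) C + 1"
    and "num_colors (all_edges V1) C + num_colors (all_edges V2) C + 1 \<le> num_colors (all_edges V) C \<Longrightarrow>
      k \<notin> C ` all_edges V1 \<union> C ` all_edges V2"
proof -
  let ?U = "C ` all_edges V1 \<union> C ` all_edges V2"
  have "finite V1" "finite V2" using assms(1,2) by auto
  then have fU: "finite ?U" by (simp add: finite_all_edges)
  have "num_colors (all_edges V) C \<le> card (insert k ?U)"
    unfolding num_colors_def using colors_across_cut[of V1 V2 V C k, OF assms(2,3)] fU by (simp add: card_mono)
  moreover have "card ?U \<le> num_colors (all_edges V1) C + num_colors (all_edges V2) C"
    unfolding num_colors_def by (rule card_Un_le)
  moreover have "card (insert k ?U) \<le> card ?U + 1" using fU by (simp add: card_insert_if)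
  ultimately show "num_colors (all_edges V) C \<le> num_colors (all_edges V1) C + num_colors (all_edges V2) C + 1"
    by linarith
  assume "num_colors (all_edges V1) C + num_colors (all_edges V2) C + 1 \<le> num_colors (all_edges V) C"
  with \<open>num_colors (all_edges V) C \<le> card (insert k ?U)\<close> \<open>card ?U \<le> _\<close>
  have "card ?U < card (insert k ?U)" by linarith
  then show "k \<notin> ?U" by (metis insert_absorb less_irrefl)
qed

lemma rainbow_triangle_within_cut:
  assumes "T \<in> rainbow_triangles V E C" "V1 \<union> V2 = V" "V1 \<inter> V2 = {}"
    and cross: "\<And>x y. x \<in> V1 \<Longrightarrow> y \<in> V2 \<Longrightarrow> C {x, y} = k"
  shows "T \<subseteq> V1 \<or> T \<subseteq> V2"
proof -
  obtain x y z where T: "T = {x, y, z}" "x \<in> V" "y \<in> V" "z \<in> V"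
      "C {x, y} \<noteq> C {x, z}" "C {x, y} \<noteq> C {y, z}" "C {x, z} \<noteq> C {y, z}"
    using assms(1) unfolding rainbow_triangle_iff by blast
  have cross': "C {p, q} = k" if "(p \<in> V1) \<noteq> (q \<in> V1)" "p \<in> V" "q \<in> V" for p q
    using that cross cross_color_commute[of V1 V2 C k, OF cross] assms(2,3) by (cases "p \<in> V1") auto
  have "(x \<in> V1) = (y \<in> V1) \<and> (x \<in> V1) = (z \<in> V1)"
    using cross'[of x y] cross'[of x z] cross'[of y z] T by metis
  then show ?thesis using T assms(2) by auto
qed

lemma in_G0_num_colors:
  assumes "in_G0 W C"
  shows "num_colors (all_edges W) C = card W - 1"
  using assms
proof cases
  case single
  then obtain w where "W = {w}" by (auto simp: card_1_singleton_iff)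
  then have "all_edges W = {}" unfolding all_edges_def by (auto simp: card_2_iff)
  then show ?thesis using single by (simp add: num_colors_def)
qed simp

lemma in_G1_num_colors: "in_G1 W C \<Longrightarrow> num_colors (all_edges W) C = card W"
  by (cases rule: in_G1.cases) simp_all

section \<open>Extending a cut through a rainbow-free apex\<close>

locale rainbow_free_apex =
  fixes V :: "'a set" and v :: 'a and a :: nat and C :: "'a set \<Rightarrow> nat"
  assumes finite_V: "finite V" and apex: "v \<in> V"
    and own_color: "\<And>e. e \<in> all_edges V \<Longrightarrow> C e = a \<Longrightarrow> v \<in> e"
    and color_present: "\<exists>x\<in>V - {v}. C {v, x} = a"
    and not_rainbow: "\<And>x y. x \<in> V - {v} \<Longrightarrow> y \<in> V - {v} \<Longrightarrow> x \<noteq> y \<Longrightarrow>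
      C {v, x} = C {v, y} \<or> C {v, x} = C {x, y} \<or> C {v, y} = C {x, y}"
begin

lemma color_off_apex: "x \<in> V - {v} \<Longrightarrow> y \<in> V - {v} \<Longrightarrow> x \<noteq> y \<Longrightarrow> C {x, y} \<noteq> a"
  using own_color[of "{x, y}"] by auto

lemma apex_color_across:
  assumes "W1 \<union> W2 = V - {v}" "W1 \<inter> W2 = {}"
    and cross: "\<And>x y. x \<in> W1 \<Longrightarrow> y \<in> W2 \<Longrightarrow> C {x, y} = k"
    and x: "x \<in> W1" "C {v, x} = a" and y: "y \<in> W2"
  shows "C {v, y} = a \<or> C {v, y} = k"
proof -
  have xy: "x \<in> V - {v}" "y \<in> V - {v}" "x \<noteq> y" using assms by auto
  then show ?thesis using not_rainbow[OF xy] color_off_apex[OF xy] cross[OF x(1) y] x(2) by auto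
qed

lemma apex_color_within:
  assumes "W \<subseteq> V - {v}" "k \<notin> C ` all_edges W"
    and x: "x \<in> W" "C {v, x} = a" and y: "y \<in> W" "C {v, y} \<noteq> a"
  shows "C {v, y} \<noteq> k"
proof
  assume "C {v, y} = k"
  have xy: "x \<in> V - {v}" "y \<in> V - {v}" "x \<noteq> y" using assms by auto
  then have "C {x, y} \<noteq> k" using assms(2) x(1) y(1) by (metis doubleton_in_all_edges image_eqI)
  then show False using not_rainbow[OF xy] color_off_apex[OF xy] x(2) y(2) \<open>C {v, y} = k\<close> by auto
qed

lemma apex_color_one_side:
  assumes "W1 \<union> W2 = V - {v}" "W1 \<inter> W2 = {}"
    and cross: "\<And>x y. x \<in> W2 \<Longrightarrow> y \<in> W1 \<Longrightarrow> C {x, y} = k" and fresh: "k \<notin> C ` all_edges W1"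
    and "x1 \<in> W1" "C {v, x1} = a" "x2 \<in> W2" "C {v, x2} = a"
  shows "\<forall>y\<in>W1. C {v, y} = a"
proof
  fix y assume y: "y \<in> W1"
  have "C {v, y} = a \<or> C {v, y} = k"
    using apex_color_across[of W2 W1 k x2 y] assms y by blast
  moreover have "C {v, y} = a \<or> C {v, y} \<noteq> k"
    using apex_color_within[of W1 k x1 y] assms y by blast
  ultimately show "C {v, y} = a" by blast
qed

lemma mono_cut_apex_alone:
  assumes "\<forall>y\<in>V - {v}. C {v, y} = a"
  shows "mono_cut V C {v} (V - {v})"
  unfolding mono_cut_def mono_between_def using assms apex color_present by auto

lemma mono_cut_insert_apex:
  assumes "W1 \<union> W2 = V - {v}" "W1 \<inter> W2 = {}" "W2 \<noteq> {}"
    and cross: "\<And>x y. x \<in> W1 \<Longrightarrow> y \<in> W2 \<Longrightarrow> C {x, y} = k"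
    and "x1 \<in> W1" "C {v, x1} = a" "\<forall>y\<in>W2. C {v, y} \<noteq> a"
  shows "mono_cut V C (insert v W1) W2"
proof -
  have "C {v, y} = k" if "y \<in> W2" for y
    using apex_color_across[OF assms(1,2) cross assms(5,6) that] assms(7) that by blast
  then have "mono_between (insert v W1) W2 C"
    unfolding mono_between_def using cross by blast
  then show ?thesis unfolding mono_cut_def using assms(1-3) apex by auto
qed

text \<open>The colour \<open>a\<close> cannot occur at \<open>v\<close> towards both sides of the cut unless it is the only
  colour at \<open>v\<close>; if it occurs only towards \<open>W1\<close>, the edges from \<open>v\<close> to \<open>W2\<close> all carry the
  cut colour \<open>k\<close>, so \<open>v\<close> can join \<open>W1\<close>.\<close>

lemma mono_cut_extend:
  assumes cut: "mono_cut (V - {v}) C W1 W2"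
    and cross: "\<And>x y. x \<in> W1 \<Longrightarrow> y \<in> W2 \<Longrightarrow> C {x, y} = k"
    and fresh: "k \<notin> C ` all_edges W1" "k \<notin> C ` all_edges W2"
  shows "\<exists>V1 V2. mono_cut V C V1 V2"
proof (cases "\<forall>y\<in>V - {v}. C {v, y} = a")
  case True
  then show ?thesis using mono_cut_apex_alone by blast
next
  case False
  have W: "W1 \<union> W2 = V - {v}" "W1 \<inter> W2 = {}" "W1 \<noteq> {}" "W2 \<noteq> {}"
    and W': "W2 \<union> W1 = V - {v}" "W2 \<inter> W1 = {}"
    using cut unfolding mono_cut_def by auto
  note cross' = cross_color_commute[of W1 W2 C k, OF cross]
  have one_side: "\<forall>y\<in>W2. C {v, y} \<noteq> a" if "x1 \<in> W1" "C {v, x1} = a" for x1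
  proof (rule ccontr)
    assume "\<not> ?thesis"
    then obtain x2 where "x2 \<in> W2" "C {v, x2} = a" by blast
    then have "\<forall>y\<in>W1. C {v, y} = a" "\<forall>y\<in>W2. C {v, y} = a"
      using apex_color_one_side[OF W(1,2) cross' fresh(1) that]
        apex_color_one_side[OF W' cross fresh(2) _ _ that] by blast+
    then show False using False W(1) by blast
  qed
  obtain x0 where x0: "x0 \<in> V - {v}" "C {v, x0} = a" using color_present by blast
  show ?thesis
  proof (cases "x0 \<in> W1")
    case True
    then show ?thesis using mono_cut_insert_apex[OF W(1,2,4) cross True x0(2)] one_side x0 by blast
  next
    case False
    then have "x0 \<in> W2" using x0(1) W(1) by blast
    moreover have "\<forall>y\<in>W1. C {v, y} \<noteq> a" using one_side \<open>x0 \<in> W2\<close> x0(2) by blast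
    ultimately have "mono_cut V C (insert v W2) W1"
      by (intro mono_cut_insert_apex[of W2 W1 k x0]) (use W W' cross' x0(2) in auto)
    then show ?thesis using mono_cut_sym by blast
  qed
qed

lemma exists_mono_cut_extend:
  assumes cut: "mono_cut (V - {v}) C W1 W2"
    and "num_colors (all_edges W1) C + num_colors (all_edges W2) C + 1 \<le> num_colors (all_edges (V - {v})) C"
  shows "\<exists>V1 V2. mono_cut V C V1 V2"
proof -
  have mono: "mono_between W1 W2 C" and "W1 \<union> W2 = V - {v}"
    using cut unfolding mono_cut_def by blast+
  obtain k where cross: "\<And>x y. x \<in> W1 \<Longrightarrow> y \<in> W2 \<Longrightarrow> C {x, y} = k"
    using mono unfolding mono_between_def by blast
  have "k \<notin> C ` all_edges W1 \<union> C ` all_edges W2"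
    using finite_V by (intro num_colors_across_cut(2)[OF _ \<open>W1 \<union> W2 = V - {v}\<close> cross assms(2)]) simp
  then show ?thesis using mono_cut_extend[OF cut cross] by blast
qed

lemma apex_color_uniform_if_rainbow_triangle:
  assumes "card (V - {v}) = 3" "num_colors (all_edges (V - {v})) C = 3"
  shows "\<forall>y\<in>V - {v}. C {v, y} = a"
proof -
  obtain x where x: "x \<in> V - {v}" "C {v, x} = a" using color_present by blast
  have "card (V - {v} - {x}) = 2" using assms(1) x(1) by (simp add: card_Diff_singleton)
  then obtain y z where "V - {v} - {x} = {y, z}" "y \<noteq> z" by (auto simp: card_2_iff)
  then have yz: "V - {v} = {x, y, z}" "x \<noteq> y" "x \<noteq> z" "y \<noteq> z" using x(1) by auto
  have "card (C ` {{x, y}, {x, z}, {y, z}}) = 3"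
    using assms(2) all_edges_triangle[OF yz(2-4)] yz(1) unfolding num_colors_def by simp
  then have "C {x, y} \<noteq> C {x, z}" "C {x, y} \<noteq> C {y, z}" "C {x, z} \<noteq> C {y, z}"
    by (auto simp: card_three_iff)
  moreover have "x \<in> V - {v}" "y \<in> V - {v}" "z \<in> V - {v}" using yz(1) by auto
  ultimately show ?thesis
    using yz x(2) not_rainbow color_off_apex by (smt (verit) insertE singletonD)
qed

lemma exists_mono_cut_if_in_G1:
  assumes "in_G1 (V - {v}) C"
  shows "\<exists>V1 V2. mono_cut V C V1 V2"
  using assms
proof cases
  case triangle
  then show ?thesis using apex_color_uniform_if_rainbow_triangle mono_cut_apex_alone by blast
next
  case (split W1 W2)
  then have cut: "mono_cut (V - {v}) C W1 W2" unfolding mono_cut_def by blast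
  have fin: "finite W1" "finite W2" using split(1) unfolding split(4)[symmetric] by simp_all
  have "card W1 + card W2 = card (V - {v})" using card_Un_disjoint[OF fin split(5)] split(4) by simp
  moreover have "card W2 \<ge> 1" using fin(2) split(7) by (simp add: Suc_le_eq card_gt_0_iff)
  moreover have "num_colors (all_edges W1) C = card W1" "num_colors (all_edges W2) C = card W2 - 1"
    using in_G1_num_colors[OF split(9)] in_G0_num_colors[OF split(10)] by auto
  ultimately show ?thesis by (intro exists_mono_cut_extend[OF cut]) (use split(3) in linarith)
qed

end

lemma rainbow_free_apexI:
  assumes "finite V" "v \<in> V" "a \<in> saturated_colors (all_edges V) C v"
    and "\<forall>T\<in>rainbow_triangles V (all_edges V) C. v \<notin> T"
  shows "rainbow_free_apex V v a C"
proof
  show "finite V" "v \<in> V" by fact+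
  show "\<And>e. e \<in> all_edges V \<Longrightarrow> C e = a \<Longrightarrow> v \<in> e" using saturated_color_at[OF assms(3)] by blast
  obtain x where "x \<in> V" "x \<noteq> v" "C {v, x} = a"
    using saturated_color_witness[of V "all_edges V" a C v] assms(1,3) by auto
  then show "\<exists>x\<in>V - {v}. C {v, x} = a" by blast
  fix x y assume "x \<in> V - {v}" "y \<in> V - {v}" "x \<noteq> y"
  then show "C {v, x} = C {v, y} \<or> C {v, x} = C {x, y} \<or> C {v, y} = C {x, y}"
    using two_colors_equal_if_not_rainbow[of v V x y C] assms(2,4) by auto
qed

lemma card_saturated_colors_le_one:
  assumes g: "edge_colored_graph V E" and v: "v \<in> V"
    and complete: "delete_vertex E v = all_edges (V - {v})"
    and no_rainbow: "\<forall>T\<in>rainbow_triangles V E C. v \<notin> T"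
  shows "card (saturated_colors E C v) \<le> 1"
proof -
  have "a = b" if a: "a \<in> saturated_colors E C v" and b: "b \<in> saturated_colors E C v" for a b
  proof (rule ccontr)
    assume "a \<noteq> b"
    obtain x where x: "x \<in> V" "x \<noteq> v" "{v, x} \<in> E" "C {v, x} = a"
      using saturated_color_witness[OF g a] by blast
    obtain y where y: "y \<in> V" "y \<noteq> v" "{v, y} \<in> E" "C {v, y} = b"
      using saturated_color_witness[OF g b] by blast
    have "x \<noteq> y" using x y \<open>a \<noteq> b\<close> by auto
    then have "{x, y} \<in> delete_vertex E v" using complete x y by simp
    then have "{x, y} \<in> E" unfolding delete_vertex_def by simp
    moreover have "C {x, y} \<noteq> a" "C {x, y} \<noteq> b"
      using saturated_color_at[OF a] saturated_color_at[OF b] \<open>{x, y} \<in> E\<close> x y by auto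
    ultimately have "{v, x, y} \<in> rainbow_triangles V E C"
      using x y v \<open>a \<noteq> b\<close> \<open>x \<noteq> y\<close> by (intro rainbow_triangleI) auto
    then show False using no_rainbow by auto
  qed
  then show ?thesis
    using finite_saturated_colors[OF finite_edges[OF g]] by (simp add: card_le_Suc0_iff_eq)
qed

section \<open>Structure of the extremal graphs\<close>

lemma exists_apex_if_rainbow_free:
  assumes fV: "finite V" and "card V \<ge> 2" and rt: "rainbow_triangles V (all_edges V) C = {}"
    and "num_colors (all_edges V) C = card V - 1"
  shows "\<exists>v a. rainbow_free_apex V v a C \<and> num_colors (all_edges (V - {v})) C = card (V - {v}) - 1"
proof -
  obtain v where v: "v \<in> V"
    "vertex_degree (all_edges V) v + card (saturated_colors (all_edges V) C v) \<le> card V"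
    using exists_low_vertex_if_rainbow_free[of V "all_edges V" C] assms by fastforce
  have "V - {v} \<noteq> {}" using assms(2) by (rule Diff_singleton_nonempty)
  then have "num_colors (all_edges (V - {v})) C \<le> card (V - {v}) - 1"
    and "card (V - {v}) \<ge> 1"
    using num_colors_le_if_rainbow_free[OF fV rt] fV by (auto simp: Suc_le_eq card_gt_0_iff)
  moreover have "card V = Suc (card (V - {v}))" using fV v(1) by (metis card_Suc_Diff1)
  ultimately have "card (saturated_colors (all_edges V) C v) = 1"
    and c': "num_colors (all_edges (V - {v})) C = card (V - {v}) - 1"
    using num_colors_all_edges_delete_vertex[OF fV, of C v] assms(4)
      card_saturated_colors_le_one_if_low_complete[OF fV v] by linarith+
  then obtain a where "a \<in> saturated_colors (all_edges V) C v" by (auto simp: card_1_singleton_iff)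
  then have "rainbow_free_apex V v a C" using rainbow_free_apexI[OF fV v(1)] rt by simp
  then show ?thesis using c' by blast
qed

lemma exists_mono_cut_if_rainbow_free:
  assumes "finite V" "card V \<ge> 2" "rainbow_triangles V (all_edges V) C = {}"
    and "num_colors (all_edges V) C = card V - 1"
  shows "\<exists>V1 V2. mono_cut V C V1 V2"
  using assms
proof (induction "card V" arbitrary: V rule: less_induct)
  case less
  note fV = less.prems(1) and rt = less.prems(3)
  obtain v a where is_apex: "rainbow_free_apex V v a C"
    and c': "num_colors (all_edges (V - {v})) C = card (V - {v}) - 1"
    using exists_apex_if_rainbow_free[OF less.prems] by blast
  interpret rainbow_free_apex V v a C by (rule is_apex)
  have n': "card V = Suc (card (V - {v}))" using card_Suc_Diff1[OF fV apex] by simp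
  show ?case
  proof (cases "card V = 2")
    case True
    then obtain p q where "V = {p, q}" "p \<noteq> q" by (auto simp: card_2_iff)
    then have "mono_cut V C {p} {q}" unfolding mono_cut_def mono_between_def by auto
    then show ?thesis by blast
  next
    case False
    then have "card (V - {v}) \<ge> 2" using less.prems(2) n' by linarith
    moreover have "rainbow_triangles (V - {v}) (all_edges (V - {v})) C = {}"
      using rainbow_triangles_induced[of "V - {v}" V C] rt by auto
    ultimately obtain W1 W2 where cut: "mono_cut (V - {v}) C W1 W2"
      using less.hyps[of "V - {v}"] n' fV c' by auto
    then have "W1 \<subseteq> V" "W2 \<subseteq> V" "W1 \<noteq> {}" "W2 \<noteq> {}" unfolding mono_cut_def by blast+
    then have "num_colors (all_edges W1) C \<le> card W1 - 1" "num_colors (all_edges W2) C \<le> card W2 - 1"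
      using num_colors_le_if_rainbow_free[OF fV rt] by blast+
    then show ?thesis
      using mono_cut_card[of "V - {v}" C W1 W2] cut fV c' by (intro exists_mono_cut_extend[OF cut]) auto
  qed
qed

lemma in_G0_if_rainbow_free:
  assumes "finite V" "V \<noteq> {}" "rainbow_triangles V (all_edges V) C = {}"
    and "num_colors (all_edges V) C = card V - 1"
  shows "in_G0 V C"
  using assms
proof (induction "card V" arbitrary: V rule: less_induct)
  case less
  note fV = less.prems(1) and rt = less.prems(3)
  show ?case
  proof (cases "card V = 1")
    case True
    then show ?thesis by (rule in_G0.single)
  next
    case False
    have "card V \<noteq> 0" using less.prems(2) fV by simp
    then have n: "card V \<ge> 2" using False by linarith
    then obtain V1 V2 where cut: "mono_cut V C V1 V2"
      using exists_mono_cut_if_rainbow_free less.prems by blast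
    then have P: "V1 \<union> V2 = V" "V1 \<inter> V2 = {}" "V1 \<noteq> {}" "V2 \<noteq> {}" "mono_between V1 V2 C"
      unfolding mono_cut_def by blast+
    then obtain k where cross: "\<And>x y. x \<in> V1 \<Longrightarrow> y \<in> V2 \<Longrightarrow> C {x, y} = k"
      unfolding mono_between_def by blast
    have sub: "V1 \<subseteq> V" "V2 \<subseteq> V" using P(1) by blast+
    note card = mono_cut_card[OF fV cut]
    have "num_colors (all_edges V1) C = card V1 - 1" "num_colors (all_edges V2) C = card V2 - 1"
      using num_colors_le_if_rainbow_free[OF fV rt sub(1) P(3)] num_colors_le_if_rainbow_free[OF fV rt sub(2) P(4)]
        num_colors_across_cut(1)[of V V1 V2 C k, OF fV P(1) cross] card(3-5) less.prems(4) by linarith+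
    moreover have "rainbow_triangles W (all_edges W) C = {}" if "W \<subseteq> V" for W
      using rainbow_triangles_induced[OF that] rt by auto
    ultimately have "in_G0 V1 C" "in_G0 V2 C"
      using less.hyps[OF _ card(1) P(3)] less.hyps[OF _ card(2) P(4)] card(3-5) sub by fastforce+
    then show ?thesis using in_G0.split[OF fV n less.prems(4) P] by blast
  qed
qed

lemma exists_mono_cut_containing_rainbow_triangle:
  assumes "mono_cut V C V1 V2" "rainbow_triangles V (all_edges V) C = {T}"
  shows "\<exists>P1 P2. mono_cut V C P1 P2 \<and> T \<subseteq> P1"
proof -
  obtain k where cross: "\<And>x y. x \<in> V1 \<Longrightarrow> y \<in> V2 \<Longrightarrow> C {x, y} = k"
    using assms(1) unfolding mono_cut_def mono_between_def by blast
  then have "T \<subseteq> V1 \<or> T \<subseteq> V2"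
    using rainbow_triangle_within_cut[of T V "all_edges V" C V1 V2] assms unfolding mono_cut_def by blast
  then show ?thesis using assms(1) mono_cut_sym by blast
qed

lemma in_G1_of_mono_cut:
  assumes fV: "finite V" and "card V \<ge> 4" "num_colors (all_edges V) C = card V"
    and cut: "mono_cut V C V1 V2" and rt2: "rainbow_triangles V2 (all_edges V2) C = {}"
    and G1: "card V1 \<le> num_colors (all_edges V1) C \<Longrightarrow> in_G1 V1 C"
  shows "in_G1 V C"
proof -
  have P: "V1 \<union> V2 = V" "V1 \<inter> V2 = {}" "V1 \<noteq> {}" "V2 \<noteq> {}" "mono_between V1 V2 C"
    using cut unfolding mono_cut_def by blast+
  then obtain k where cross: "\<And>x y. x \<in> V1 \<Longrightarrow> y \<in> V2 \<Longrightarrow> C {x, y} = k"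
    unfolding mono_between_def by blast
  note card = mono_cut_card[OF fV cut]
  have c2: "num_colors (all_edges V2) C \<le> card V2 - 1"
    using num_colors_le_if_rainbow_free[OF card(2) rt2 order_refl P(4)] .
  have across: "num_colors (all_edges V) C \<le> num_colors (all_edges V1) C + num_colors (all_edges V2) C + 1"
    using num_colors_across_cut(1)[of V V1 V2 C k, OF fV P(1) cross] .
  then have "in_G1 V1 C" using c2 card assms(3) by (intro G1) linarith
  then have "num_colors (all_edges V2) C = card V2 - 1"
    using in_G1_num_colors c2 across card assms(3) by fastforce
  then have "in_G0 V2 C" using in_G0_if_rainbow_free[OF card(2) P(4) rt2] by blast
  then show ?thesis using in_G1.split[OF fV assms(2,3) P \<open>in_G1 V1 C\<close>] by blast
qed

lemma complete_if_one_rainbow_triangle: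
  assumes "edge_colored_graph V E" "card V \<ge> 3"
    and "Suc (card V) choose 2 \<le> card E + num_colors E C" "card (rainbow_triangles V E C) = 1"
  shows "E = all_edges V"
  using assms
proof (induction "card V" arbitrary: V E rule: less_induct)
  case less
  note g = less.prems(1)
  have fV: "finite V" using g edge_colored_graph_def by blast
  obtain T where rt: "rainbow_triangles V E C = {T}"
    using less.prems(4) by (auto simp: card_1_singleton_iff)
  then have T: "T \<subseteq> V" "card T = 3" "all_edges T \<subseteq> E" unfolding rainbow_triangles_def by auto
  show ?case
  proof (cases "card V = 3")
    case True
    then have "T = V" using card_subset_eq[OF fV T(1)] T(2) by simp
    then show ?thesis using T(3) g unfolding edge_colored_graph_def by blast
  next
    case False
    then have n: "card V \<ge> 4" using less.prems(2) by simp
    obtain v where v: "v \<in> V" "vertex_degree E v + card (saturated_colors E C v) \<le> card V"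
      using exists_low_vertex_if_one_rainbow_triangle[OF g n rt] by blast
    have "v \<notin> T" using low_vertex_not_in_rainbow_triangle[OF g _ rt less.prems(3) v] n by simp
    then have rt': "rainbow_triangles (V - {v}) (delete_vertex E v) C = {T}"
      using rt unfolding rainbow_triangles_delete_vertex by auto
    have n': "card V = Suc (card (V - {v}))" using fV v(1) by (metis card_Suc_Diff1)
    have g': "edge_colored_graph (V - {v}) (delete_vertex E v)" by (rule edge_colored_graph_delete_vertex[OF g])
    have split: "card E + num_colors E C = card (delete_vertex E v) + num_colors (delete_vertex E v) C +
        (vertex_degree E v + card (saturated_colors E C v))"
      using card_plus_num_colors_delete_vertex[OF finite_edges[OF g]] .
    have "delete_vertex E v = all_edges (V - {v})"
    proof (rule less.hyps[OF _ g'])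
      show "card (V - {v}) < card V" "3 \<le> card (V - {v})" using n n' by simp_all
      show "Suc (card (V - {v})) choose 2 \<le> card (delete_vertex E v) + num_colors (delete_vertex E v) C"
        using split less.prems(3) v(2) n' by (simp add: Suc_choose_two)
      show "card (rainbow_triangles (V - {v}) (delete_vertex E v) C) = 1" using rt' by simp
    qed
    moreover have "card (delete_vertex E v) + num_colors (delete_vertex E v) C \<le> Suc (card (V - {v})) choose 2"
      using edges_plus_colors_le_if_at_most_one_rainbow_triangle[OF g'] rt' by simp
    moreover have "card (saturated_colors E C v) \<le> 1"
      using card_saturated_colors_le_one[OF g v(1)] calculation(1) rt \<open>v \<notin> T\<close> by blast
    ultimately have "vertex_degree E v = card V - 1"
      using split less.prems(3) vertex_degree_le[OF g v(1)] n' by (simp add: Suc_choose_two)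
    then show ?thesis
      using complete_if_delete_vertex_complete[OF g v(1) \<open>delete_vertex E v = _\<close>] by blast
  qed
qed

lemma exists_apex_off_rainbow_triangle:
  assumes fV: "finite V" and n: "card V \<ge> 4" and rt: "rainbow_triangles V (all_edges V) C = {T}"
    and "card V \<le> num_colors (all_edges V) C"
  shows "\<exists>v a. v \<notin> T \<and> rainbow_free_apex V v a C \<and> num_colors (all_edges V) C = card V \<and>
    card (V - {v}) \<le> num_colors (all_edges (V - {v})) C"
proof -
  have g: "edge_colored_graph V (all_edges V)" using fV by simp
  have e: "card (all_edges V) = card V choose 2" by (rule card_all_edges[OF fV])
  obtain v where v: "v \<in> V" "vertex_degree (all_edges V) v + card (saturated_colors (all_edges V) C v) \<le> card V"
    using exists_low_vertex_if_one_rainbow_triangle[OF g n rt] by blast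
  have "v \<notin> T"
    using low_vertex_not_in_rainbow_triangle[OF g _ rt _ v] n assms(4) e by (simp add: Suc_choose_two)
  moreover have "T \<subseteq> V" using rt unfolding rainbow_triangles_def by blast
  ultimately have "rainbow_triangles (V - {v}) (all_edges (V - {v})) C = {T}"
    using rainbow_triangles_induced[of "V - {v}" V C] rt by auto
  then have "num_colors (all_edges (V - {v})) C \<le> card (V - {v})"
    using edges_plus_colors_le_if_at_most_one_rainbow_triangle[of "V - {v}" "all_edges (V - {v})" C] fV
    by (simp add: card_all_edges Suc_choose_two)
  moreover have "card V = Suc (card (V - {v}))" using fV v(1) by (metis card_Suc_Diff1)
  ultimately have "card (saturated_colors (all_edges V) C v) = 1"
    and c: "num_colors (all_edges V) C = card V"
    and c': "card (V - {v}) \<le> num_colors (all_edges (V - {v})) C"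
    using num_colors_all_edges_delete_vertex[OF fV, of C v] assms(4)
      card_saturated_colors_le_one_if_low_complete[OF fV v] by linarith+
  then obtain a where "a \<in> saturated_colors (all_edges V) C v" by (auto simp: card_1_singleton_iff)
  then have "rainbow_free_apex V v a C" using rainbow_free_apexI[OF fV v(1)] rt \<open>v \<notin> T\<close> by simp
  then show ?thesis using \<open>v \<notin> T\<close> c c' by blast
qed

lemma in_G1_if_complete_one_rainbow_triangle:
  assumes "finite V" "card V \<ge> 3" "rainbow_triangles V (all_edges V) C = {T}"
    and "card V \<le> num_colors (all_edges V) C"
  shows "in_G1 V C"
  using assms
proof (induction "card V" arbitrary: V T rule: less_induct)
  case less
  note fV = less.prems(1) and rt = less.prems(3)
  have T: "T \<subseteq> V" "card T = 3" using rt unfolding rainbow_triangles_def by auto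
  show ?case
  proof (cases "card V = 3")
    case True
    have "num_colors (all_edges V) C \<le> 3"
      using num_colors_le_card_edges[OF finite_all_edges[OF fV]] card_all_edges[OF fV] True
      by (simp add: choose_two)
    then show ?thesis using in_G1.triangle[of V C] True less.prems(4) by simp
  next
    case False
    then have n: "card V \<ge> 4" using less.prems(2) by simp
    obtain v a where "v \<notin> T" and is_apex: "rainbow_free_apex V v a C"
      and c: "num_colors (all_edges V) C = card V"
      and c': "card (V - {v}) \<le> num_colors (all_edges (V - {v})) C"
      using exists_apex_off_rainbow_triangle[OF fV n rt less.prems(4)] by blast
    interpret rainbow_free_apex V v a C by (rule is_apex)
    have "rainbow_triangles (V - {v}) (all_edges (V - {v})) C = {T}"
      using rainbow_triangles_induced[of "V - {v}" V C] rt \<open>v \<notin> T\<close> T(1) by auto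
    then have "in_G1 (V - {v}) C" using less.hyps[of "V - {v}", OF _ _ _ _ c'] fV n apex by simp
    then obtain V1 V2 where "mono_cut V C V1 V2" using exists_mono_cut_if_in_G1 by blast
    then obtain P1 P2 where cut: "mono_cut V C P1 P2" and "T \<subseteq> P1"
      using exists_mono_cut_containing_rainbow_triangle rt by blast
    then have P: "P1 \<subseteq> V" "P2 \<subseteq> V" "P1 \<inter> P2 = {}" unfolding mono_cut_def by blast+
    have rt1: "rainbow_triangles P1 (all_edges P1) C = {T}"
      using rainbow_triangles_induced[OF P(1), of C] rt \<open>T \<subseteq> P1\<close> by auto
    have "T \<noteq> {}" using T(2) by auto
    then have "\<not> T \<subseteq> P2" using \<open>T \<subseteq> P1\<close> P(3) by blast
    then have rt2: "rainbow_triangles P2 (all_edges P2) C = {}"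
      using rainbow_triangles_induced[OF P(2), of C] rt by auto
    note card = mono_cut_card[OF fV cut]
    have "card P1 < card V" using card(3,5) by linarith
    moreover have "card P1 \<ge> 3" using card_mono[OF card(1) \<open>T \<subseteq> P1\<close>] T(2) by simp
    ultimately show ?thesis
      by (intro in_G1_of_mono_cut[OF fV n c cut rt2]) (rule less.hyps[OF _ card(1) _ rt1])
  qed
qed

theorem theorem3:
  fixes V :: "'a set" and E :: "'a set set" and C :: "'a set \<Rightarrow> nat"
  assumes "edge_colored_graph V E"
    and "card V \<ge> 3"
    and "card E + num_colors E C \<ge> (card V + 1) choose 2"
    and "card (rainbow_triangles V E C) = 1"
  shows "E = all_edges V \<and> in_G1 V C"
proof -
  have fV: "finite V" using assms(1) edge_colored_graph_def by blast
  have complete: "E = all_edges V"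
    using complete_if_one_rainbow_triangle[OF assms(1,2) _ assms(4)] assms(3) by simp
  obtain T where "rainbow_triangles V (all_edges V) C = {T}"
    using assms(4) complete by (auto simp: card_1_singleton_iff)
  moreover have "card V \<le> num_colors (all_edges V) C"
    using assms(3) complete card_all_edges[OF fV] by (simp add: Suc_choose_two)
  ultimately have "in_G1 V C" using in_G1_if_complete_one_rainbow_triangle[OF fV assms(2)] by blast
  with complete show ?thesis by blast
qed

end
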